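(* Let $L>0$, $N\in\mathbb{N}_+$, $h=L/N$, $\epsilon>0$, $\theta_0>0$, $\tau>0$, $A\ge0$, $\alpha\in(0,1)$, $\rho_u>0$, $\rho_w>0$, and let $u^n,u^{n-1}\in\mathcal{C}_{per}$ with $-1<u^n<1$ and $-1<u^{n-1}<1$ pointwise. Let $u^{n+1}\in\mathcal{C}_{per}$ (with $-1<u^{n+1}<1$ pointwise) be the solution of the second-order convex splitting scheme, i.e. together with some $w^{n+1}\in\mathcal{C}_{per}$, $$3u^{n+1}-4u^n+u^{n-1}=2\tau\Delta_hw^{n+1},$$ $$w^{n+1}=\log(1+u^{n+1})-\log(1-u^{n+1})-\theta_0(2u^n-u^{n-1})-\epsilon^2\Delta_hu^{n+1}-A\tau\theta_0^2\Delta_h(u^{n+1}-u^n).$$ Let $\{u_2^{(k)}\}$ be the sequence generated by Algorithm 2 (described in the context). Then $\lim_{k\to\infty}\|u_2^{(k)}-u^{n+1}\|_2=0$.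
   Context: $\mathcal{C}_{per}$ is the space of real grid functions $\nu=(\nu_{i,j,k})_{i,j,k\in\mathbb{Z}}$ that are $N$-periodic in each index (values at cell centres of a uniform grid of mesh size $h$ on $(0,L)^3$). Inner product $\langle\nu,\xi\rangle=h^2\sum_{i,j,k=1}^N\nu_{i,j,k}\xi_{i,j,k}$, $\|\nu\|_2=\langle\nu,\nu\rangle^{1/2}$. Discrete Laplacian $(\Delta_h\nu)_{i,j,k}=h^{-2}(\nu_{i+1,j,k}+\nu_{i-1,j,k}+\nu_{i,j+1,k}+\nu_{i,j-1,k}+\nu_{i,j,k+1}+\nu_{i,j,k-1}-6\nu_{i,j,k})$. Operations and inequalities are pointwise. The solution $(u^{n+1},w^{n+1})$ of the scheme exists and is unique. Algorithm 2: set $u_2^{(0)}=u^n$, $w_2^{(0)}=0$, $u_3^{(0)}=0$, $w_3^{(0)}=0$. For $k=0,1,2,\dots$: (i) find $u_1^{(k+1)},w_1^{(k+1)}\in\mathcal{C}_{per}$ solving $(-\epsilon^2-A\tau\theta_0^2)\Delta_hu_1^{(k+1)}+A\tau\theta_0^2\Delta_hu^n-\alpha w_1^{(k+1)}+u_3^{(k)}+\rho_u(u_1^{(k+1)}-u_2^{(k)})=0$ and $\alpha(-u_1^{(k+1)}+\frac43u^n-\frac13u^{n-1})+\frac{2\tau}{3}\Delta_hw_1^{(k+1)}-w_3^{(k)}-\rho_w(w_1^{(k+1)}-w_2^{(k)})=0$; (ii) find $u_2^{(k+1)},w_2^{(k+1)}\in\mathcal{C}_{per}$ with $-1<u_2^{(k+1)}<1$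 solving $\log(1+u_2^{(k+1)})-\log(1-u_2^{(k+1)})-\theta_0(2u^n-u^{n-1})-(1-\alpha)w_2^{(k+1)}-u_3^{(k)}-\rho_u(u_1^{(k+1)}-u_2^{(k+1)})=0$ and $(1-\alpha)(-u_2^{(k+1)}+\frac43u^n-\frac13u^{n-1})+w_3^{(k)}+\rho_w(w_1^{(k+1)}-w_2^{(k+1)})=0$; (iii) set $u_3^{(k+1)}=u_3^{(k)}+\rho_u(u_1^{(k+1)}-u_2^{(k+1)})$, $w_3^{(k+1)}=w_3^{(k)}+\rho_w(w_1^{(k+1)}-w_2^{(k+1)})$. *)

theory Defs
  imports Complex_Main
begin

text \<open>Grid functions on cell centres, indexed by integer triples.\<close>
type_synonym grid = "int \<Rightarrow> int \<Rightarrow> int \<Rightarrow> real"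

definition per :: "nat \<Rightarrow> grid \<Rightarrow> bool" where
  "per N v \<longleftrightarrow> (\<forall>i j k. v (i + int N) j k = v i j k \<and> v i (j + int N) k = v i j k
                       \<and> v i j (k + int N) = v i j k)"

definition lap :: "real \<Rightarrow> grid \<Rightarrow> grid" where
  "lap h v = (\<lambda>i j k. (v (i+1) j k + v (i-1) j k + v i (j+1) k + v i (j-1) k
                        + v i j (k+1) + v i j (k-1) - 6 * v i j k) / h\<^sup>2)"

definition ip :: "real \<Rightarrow> nat \<Rightarrow> grid \<Rightarrow> grid \<Rightarrow> real" where
  "ip h N v x = h\<^sup>2 * (\<Sum>i\<in>{1..int N}. \<Sum>j\<in>{1..int N}. \<Sum>k\<in>{1..int N}. v i j k * x i j k)"

definition norm2 :: "real \<Rightarrow> nat \<Rightarrow> grid \<Rightarrow> real" where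
  "norm2 h N v = sqrt (ip h N v v)"

end

(* Algorithm 2 is an ADMM iteration: step (i) is a linear solve, step (ii) a pointwise
   nonlinear solve, and step (iii) updates the multipliers u3, w3.  The scheme solution
   (un1, wn1), together with explicit multipliers u3*, w3*, is a fixed point.  The energy
     |u3 - u3*|^2/rho_u + rho_u |u2 - un1|^2 + |w3 - w3*|^2/rho_w + rho_w |w2 - wn1|^2
   decreases by at least 2 |u2 - un1|^2 per iteration: the linear step contributes a
   nonnegative term because -Delta_h is positive semidefinite on periodic grid functions
   (the alpha-coupling is skew and cancels), and the nonlinear step contributes through the
   strong monotonicity of ln(1 + x) - ln(1 - x).  Hence |u2 - un1|^2 is summable. *)

theory Submission
  imports Defs
begin

definition grid_sum :: "nat \<Rightarrow> grid \<Rightarrow> real" where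
  "grid_sum N f = (\<Sum>i\<in>{1..int N}. \<Sum>j\<in>{1..int N}. \<Sum>k\<in>{1..int N}. f i j k)"

lemma grid_sum_mono: "(\<And>i j k. f i j k \<le> g i j k) \<Longrightarrow> grid_sum N f \<le> grid_sum N g"
  unfolding grid_sum_def by (intro sum_mono) auto

lemma grid_sum_nonneg: "(\<And>i j k. 0 \<le> f i j k) \<Longrightarrow> 0 \<le> grid_sum N f"
  unfolding grid_sum_def by (intro sum_nonneg) auto

lemma grid_sum_add: "grid_sum N (\<lambda>i j k. f i j k + g i j k) = grid_sum N f + grid_sum N g"
  unfolding grid_sum_def by (simp add: sum.distrib)

lemma grid_sum_diff: "grid_sum N (\<lambda>i j k. f i j k - g i j k) = grid_sum N f - grid_sum N g"
  unfolding grid_sum_def by (simp add: sum_subtractf)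

lemma grid_sum_cmult: "grid_sum N (\<lambda>i j k. c * f i j k) = c * grid_sum N f"
  unfolding grid_sum_def by (simp add: sum_distrib_left)

lemma grid_sum_rotate: "grid_sum N (\<lambda>i j k. f j k i) = grid_sum N f"
  unfolding grid_sum_def by (subst sum.swap) (rule sum.cong[OF refl], rule sum.swap)

lemma grid_sum_nonpos_innermost:
  "(\<And>i j. (\<Sum>k\<in>{1..int N}. f i j k) \<le> 0) \<Longrightarrow> grid_sum N f \<le> 0"
  unfolding grid_sum_def by (simp add: sum_nonpos)

lemma norm2_eq_grid_sum: "norm2 h N v = sqrt (h\<^sup>2 * grid_sum N (\<lambda>i j k. (v i j k)\<^sup>2))"
  unfolding norm2_def ip_def grid_sum_def by (simp add: power2_eq_square)

lemma sum_telescope_int: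
  fixes f :: "int \<Rightarrow> real"
  shows "(\<Sum>i\<in>{1..int M}. f (i + 1) - f i) = f (int M + 1) - f 1"
proof (induction M)
  case (Suc M)
  have "{1..int (Suc M)} = insert (int M + 1) {1..int M}" by auto
  then show ?case using Suc by simp
qed simp

lemma periodic_sum_shift:
  fixes f :: "int \<Rightarrow> real"
  assumes "\<And>i. f (i + int N) = f i"
  shows "(\<Sum>i\<in>{1..int N}. f (i + 1)) = (\<Sum>i\<in>{1..int N}. f i)"
  using sum_telescope_int[of f N] assms[of 1] by (simp add: sum_subtractf add.commute)

lemma periodic_sum_second_difference:
  fixes f :: "int \<Rightarrow> real"
  assumes "\<And>i. f (i + int N) = f i"
  shows "(\<Sum>i\<in>{1..int N}. (f (i + 1) + f (i - 1) - 2 * f i) * f i)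
       = - (\<Sum>i\<in>{1..int N}. (f (i + 1) - f i)\<^sup>2)"
proof -
  have "(\<Sum>i\<in>{1..int N}. f (i - 1) * f i) = (\<Sum>i\<in>{1..int N}. f i * f (i + 1))"
    using periodic_sum_shift[of "\<lambda>i. f (i - 1) * f i" N] assms
    by (simp add: diff_add_eq[symmetric])
  moreover have "(\<Sum>i\<in>{1..int N}. (f (i + 1))\<^sup>2) = (\<Sum>i\<in>{1..int N}. (f i)\<^sup>2)"
    using periodic_sum_shift[of "\<lambda>i. (f i)\<^sup>2" N] assms by simp
  ultimately show ?thesis
    by (simp add: algebra_simps power2_eq_square sum.distrib sum_subtractf sum_distrib_left)
qed

lemma grid_sum_second_difference_nonpos:
  assumes "\<And>i j k. v i j (k + int N) = v i j k"
  shows "grid_sum N (\<lambda>i j k. (v i j (k + 1) + v i j (k - 1) - 2 * v i j k) * v i j k) \<le> 0"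
proof (rule grid_sum_nonpos_innermost)
  fix i j
  show "(\<Sum>k\<in>{1..int N}. (v i j (k + 1) + v i j (k - 1) - 2 * v i j k) * v i j k) \<le> 0"
    using periodic_sum_second_difference[of "v i j" N] assms by (simp add: sum_nonneg)
qed

lemma lap_diff: "lap h (\<lambda>i j k. f i j k - g i j k) i j k = lap h f i j k - lap h g i j k"
  unfolding lap_def by (simp add: diff_divide_distrib[symmetric])

lemma per_diff: "per N f \<Longrightarrow> per N g \<Longrightarrow> per N (\<lambda>i j k. f i j k - g i j k)"
  unfolding per_def by auto

lemma grid_sum_lap_times_nonpos:
  assumes "per N v"
  shows "grid_sum N (\<lambda>i j k. lap h v i j k * v i j k) \<le> 0"
proof -
  define D1 where "D1 i j k = (v (i + 1) j k + v (i - 1) j k - 2 * v i j k) * v i j k" for i j k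
  define D2 where "D2 i j k = (v i (j + 1) k + v i (j - 1) k - 2 * v i j k) * v i j k" for i j k
  define D3 where "D3 i j k = (v i j (k + 1) + v i j (k - 1) - 2 * v i j k) * v i j k" for i j k
  have "grid_sum N D1 = grid_sum N (\<lambda>i j k. D1 k i j)"
    using grid_sum_rotate[of N "\<lambda>i j k. D1 k i j"] by simp
  also have "\<dots> \<le> 0"
    unfolding D1_def by (rule grid_sum_second_difference_nonpos) (use assms in \<open>simp add: per_def\<close>)
  finally have "grid_sum N D1 \<le> 0" .
  moreover have "grid_sum N D2 = grid_sum N (\<lambda>i j k. D2 j k i)"
    using grid_sum_rotate[of N D2] by simp
  moreover have "\<dots> \<le> 0"
    unfolding D2_def by (rule grid_sum_second_difference_nonpos) (use assms in \<open>simp add: per_def\<close>)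
  moreover have "grid_sum N D3 \<le> 0"
    unfolding D3_def by (rule grid_sum_second_difference_nonpos) (use assms in \<open>simp add: per_def\<close>)
  moreover have "lap h v i j k * v i j k = inverse (h\<^sup>2) * (D1 i j k + D2 i j k + D3 i j k)" for i j k
    unfolding lap_def D1_def D2_def D3_def by (simp add: field_simps)
  then have "grid_sum N (\<lambda>i j k. lap h v i j k * v i j k)
      = inverse (h\<^sup>2) * (grid_sum N D1 + grid_sum N D2 + grid_sum N D3)"
    by (simp add: grid_sum_add grid_sum_cmult)
  ultimately show ?thesis by (simp add: mult_nonneg_nonpos)
qed

lemma grid_sum_coupled_lap_nonneg:
  assumes "per N eu" "per N ew" "0 \<le> c\<^sub>u" "0 \<le> c\<^sub>w"
  shows "0 \<le> grid_sum N (\<lambda>i j k. (- c\<^sub>u * lap h eu i j k - \<alpha> * ew i j k) * eu i j k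
                                + (\<alpha> * eu i j k - c\<^sub>w * lap h ew i j k) * ew i j k)"
proof -
  have "grid_sum N (\<lambda>i j k. (- c\<^sub>u * lap h eu i j k - \<alpha> * ew i j k) * eu i j k
                          + (\<alpha> * eu i j k - c\<^sub>w * lap h ew i j k) * ew i j k)
      = - c\<^sub>u * grid_sum N (\<lambda>i j k. lap h eu i j k * eu i j k)
        - c\<^sub>w * grid_sum N (\<lambda>i j k. lap h ew i j k * ew i j k)"
    by (simp add: algebra_simps grid_sum_diff[symmetric] grid_sum_cmult[symmetric])
  moreover have "c\<^sub>u * grid_sum N (\<lambda>i j k. lap h eu i j k * eu i j k) \<le> 0"
    using assms(3) grid_sum_lap_times_nonpos[OF assms(1)] by (rule mult_nonneg_nonpos)
  moreover have "c\<^sub>w * grid_sum N (\<lambda>i j k. lap h ew i j k * ew i j k) \<le> 0"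
    using assms(4) grid_sum_lap_times_nonpos[OF assms(2)] by (rule mult_nonneg_nonpos)
  ultimately show ?thesis by linarith
qed

definition log_ratio :: "real \<Rightarrow> real" where
  "log_ratio x = ln (1 + x) - ln (1 - x)"

lemma ln_one_plus_diff_ge:
  fixes a b :: real
  assumes "-1 < a" "a \<le> b" "b < 1"
  shows "(b - a) / 2 \<le> ln (1 + b) - ln (1 + a)"
proof -
  have "ln (1 + a) - ln (1 + b) = ln ((1 + a) / (1 + b))" using assms by (simp add: ln_div)
  also have "\<dots> \<le> (1 + a) / (1 + b) - 1" using assms by (intro ln_le_minus_one) simp
  also have "\<dots> = - ((b - a) / (1 + b))" using assms by (simp add: field_simps)
  also have "\<dots> \<le> - ((b - a) / 2)" using assms by (intro le_imp_neg_le divide_left_mono) auto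
  finally show ?thesis by linarith
qed

lemma log_ratio_diff_ge:
  assumes "-1 < a" "a \<le> b" "b < 1"
  shows "b - a \<le> log_ratio b - log_ratio a"
  using ln_one_plus_diff_ge[of a b] ln_one_plus_diff_ge[of "-b" "-a"] assms
  unfolding log_ratio_def by simp

lemma log_ratio_strongly_monotone:
  assumes "-1 < x" "x < 1" "-1 < y" "y < 1"
  shows "(x - y)\<^sup>2 \<le> (log_ratio x - log_ratio y) * (x - y)"
proof (cases "y \<le> x")
  case True
  then show ?thesis
    using log_ratio_diff_ge[of y x] assms by (simp add: power2_eq_square mult_right_mono)
next
  case False
  then have "(y - x) * (y - x) \<le> (log_ratio y - log_ratio x) * (y - x)"
    using log_ratio_diff_ge[of x y] assms by (intro mult_right_mono) auto
  then show ?thesis by (simp add: power2_eq_square algebra_simps)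
qed

lemma nonlinear_step_strongly_monotone:
  assumes "u3 = log_ratio u2 - T - b * w2" "w3 = b * (u2 - a)"
    and "u3' = log_ratio u2' - T - b * w2'" "w3' = b * (u2' - a)"
    and "-1 < u2" "u2 < 1" "-1 < u2'" "u2' < 1"
  shows "(u2' - u2)\<^sup>2 \<le> (u3' - u3) * (u2' - u2) + (w3' - w3) * (w2' - w2)"
proof -
  have "(u3' - u3) * (u2' - u2) + (w3' - w3) * (w2' - w2)
      = (log_ratio u2' - log_ratio u2) * (u2' - u2)"
    unfolding assms(1-4) by (simp add: algebra_simps)
  then show ?thesis using log_ratio_strongly_monotone assms(5-8) by simp
qed

definition admm_energy :: "real \<Rightarrow> real \<Rightarrow> real \<Rightarrow> real \<Rightarrow> real \<Rightarrow> real \<Rightarrow> real" where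
  "admm_energy \<rho>u \<rho>w du3 du2 dw3 dw2 = du3\<^sup>2 / \<rho>u + \<rho>u * du2\<^sup>2 + dw3\<^sup>2 / \<rho>w + \<rho>w * dw2\<^sup>2"

lemma admm_energy_nonneg: "0 < \<rho>u \<Longrightarrow> 0 < \<rho>w \<Longrightarrow> 0 \<le> admm_energy \<rho>u \<rho>w du3 du2 dw3 dw2"
  unfolding admm_energy_def by (intro add_nonneg_nonneg) auto

lemma admm_energy_descent:
  assumes "0 < \<rho>u" "0 < \<rho>w"
    and "u3 = u3p + \<rho>u * (u1 - u2)" "w3 = w3p + \<rho>w * (w1 - w2)"
    and mono_fixed: "(u2 - us)\<^sup>2 \<le> (u3 - u3s) * (u2 - us) + (w3 - w3s) * (w2 - ws)"
    and mono_step: "0 \<le> (u3 - u3p) * (u2 - u2p) + (w3 - w3p) * (w2 - w2p)"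
  shows "2 * ((- (u3 - u3s) - \<rho>u * (u2 - u2p)) * (u1 - us)
              + (- (w3 - w3s) - \<rho>w * (w2 - w2p)) * (w1 - ws)) + 2 * (u2 - us)\<^sup>2
     \<le> admm_energy \<rho>u \<rho>w (u3p - u3s) (u2p - us) (w3p - w3s) (w2p - ws)
       - admm_energy \<rho>u \<rho>w (u3 - u3s) (u2 - us) (w3 - w3s) (w2 - ws)"
proof -
  have u1: "u1 = u2 + (u3 - u3p) / \<rho>u" and w1: "w1 = w2 + (w3 - w3p) / \<rho>w"
    using assms(1-4) by (simp_all add: field_simps)
  have "admm_energy \<rho>u \<rho>w (u3p - u3s) (u2p - us) (w3p - w3s) (w2p - ws)
       - admm_energy \<rho>u \<rho>w (u3 - u3s) (u2 - us) (w3 - w3s) (w2 - ws)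
       - (2 * ((- (u3 - u3s) - \<rho>u * (u2 - u2p)) * (u1 - us)
              + (- (w3 - w3s) - \<rho>w * (w2 - w2p)) * (w1 - ws)) + 2 * (u2 - us)\<^sup>2)
     = 2 * ((u3 - u3s) * (u2 - us) + (w3 - w3s) * (w2 - ws) - (u2 - us)\<^sup>2)
       + 2 * ((u3 - u3p) * (u2 - u2p) + (w3 - w3p) * (w2 - w2p))
       + admm_energy \<rho>u \<rho>w (u3 - u3p) (u2 - u2p) (w3 - w3p) (w2 - w2p)"
    unfolding u1 w1 admm_energy_def using assms(1,2) by (simp add: field_simps power2_eq_square)
  moreover have "0 \<le> admm_energy \<rho>u \<rho>w (u3 - u3p) (u2 - u2p) (w3 - w3p) (w2 - w2p)"
    using assms(1,2) by (rule admm_energy_nonneg)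
  ultimately show ?thesis using mono_fixed mono_step by argo
qed

lemma tendsto_zero_of_energy_descent:
  fixes V E :: "nat \<Rightarrow> real"
  assumes "\<And>n. 0 \<le> V n" "\<And>n. 0 \<le> E n" "\<And>n. V (Suc n) + E n \<le> V n"
  shows "E \<longlonglongrightarrow> 0"
proof (rule summable_LIMSEQ_zero, rule summableI_nonneg_bounded)
  have partial_sum: "(\<Sum>i<n. E i) \<le> V 0 - V n" for n
  proof (induction n)
    case (Suc n)
    then show ?case using assms(3)[of n] by simp
  qed simp
  then show "(\<Sum>i<n. E i) \<le> V 0" for n
    using partial_sum[of n] assms(1)[of n] by linarith
qed (use assms(2) in auto)

locale admm_iteration =
  fixes N :: nat and h \<epsilon> \<theta>0 \<tau> A \<alpha> \<rho>u \<rho>w :: real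
    and un unm1 un1 wn1 :: grid
    and u1 w1 u2 w2 u3 w3 :: "nat \<Rightarrow> grid"
  assumes tau_pos: "\<tau> > 0" and A_nonneg: "A \<ge> 0" and rho_u_pos: "\<rho>u > 0" and rho_w_pos: "\<rho>w > 0"
    and per_un1: "per N un1" and per_wn1: "per N wn1"
    and un1_bounds: "\<forall>i j k. -1 < un1 i j k \<and> un1 i j k < 1"
    and scheme_u: "\<forall>i j k. 3 * un1 i j k - 4 * un i j k + unm1 i j k = 2 * \<tau> * lap h wn1 i j k"
    and scheme_w: "\<forall>i j k. wn1 i j k = ln (1 + un1 i j k) - ln (1 - un1 i j k)
                  - \<theta>0 * (2 * un i j k - unm1 i j k) - \<epsilon>\<^sup>2 * lap h un1 i j k
                  - A * \<tau> * \<theta>0\<^sup>2 * lap h (\<lambda>i j k. un1 i j k - un i j k) i j k"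
    and per_step_i: "\<forall>m. per N (u1 (Suc m)) \<and> per N (w1 (Suc m))"
    and step_i_u: "\<forall>m i j k. (- \<epsilon>\<^sup>2 - A * \<tau> * \<theta>0\<^sup>2) * lap h (u1 (Suc m)) i j k
              + A * \<tau> * \<theta>0\<^sup>2 * lap h un i j k - \<alpha> * w1 (Suc m) i j k + u3 m i j k
              + \<rho>u * (u1 (Suc m) i j k - u2 m i j k) = 0"
    and step_i_w: "\<forall>m i j k. \<alpha> * (- u1 (Suc m) i j k + 4/3 * un i j k - 1/3 * unm1 i j k)
              + 2 * \<tau> / 3 * lap h (w1 (Suc m)) i j k - w3 m i j k
              - \<rho>w * (w1 (Suc m) i j k - w2 m i j k) = 0"
    and step_ii_bounds: "\<forall>m i j k. -1 < u2 (Suc m) i j k \<and> u2 (Suc m) i j k < 1"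
    and step_ii_u: "\<forall>m i j k. ln (1 + u2 (Suc m) i j k) - ln (1 - u2 (Suc m) i j k)
              - \<theta>0 * (2 * un i j k - unm1 i j k) - (1 - \<alpha>) * w2 (Suc m) i j k - u3 m i j k
              - \<rho>u * (u1 (Suc m) i j k - u2 (Suc m) i j k) = 0"
    and step_ii_w: "\<forall>m i j k. (1 - \<alpha>) * (- u2 (Suc m) i j k + 4/3 * un i j k - 1/3 * unm1 i j k)
              + w3 m i j k + \<rho>w * (w1 (Suc m) i j k - w2 (Suc m) i j k) = 0"
    and step_iii_u: "\<forall>m i j k. u3 (Suc m) i j k = u3 m i j k + \<rho>u * (u1 (Suc m) i j k - u2 (Suc m) i j k)"
    and step_iii_w: "\<forall>m i j k. w3 (Suc m) i j k = w3 m i j k + \<rho>w * (w1 (Suc m) i j k - w2 (Suc m) i j k)"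
begin

text \<open>The multipliers of the fixed point \<open>u1 = u2 = un1\<close>, \<open>w1 = w2 = wn1\<close> of the iteration.\<close>

definition u3_fix :: grid where
  "u3_fix i j k = log_ratio (un1 i j k) - \<theta>0 * (2 * un i j k - unm1 i j k) - (1 - \<alpha>) * wn1 i j k"

definition w3_fix :: grid where
  "w3_fix i j k = (1 - \<alpha>) * (un1 i j k - (4/3 * un i j k - 1/3 * unm1 i j k))"

definition point_energy :: "nat \<Rightarrow> grid" where
  "point_energy m i j k = admm_energy \<rho>u \<rho>w
     (u3 m i j k - u3_fix i j k) (u2 m i j k - un1 i j k) (w3 m i j k - w3_fix i j k) (w2 m i j k - wn1 i j k)"

definition energy :: "nat \<Rightarrow> real" where
  "energy m = grid_sum N (point_energy m)"

definition error :: "nat \<Rightarrow> real" where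
  "error m = grid_sum N (\<lambda>i j k. (u2 m i j k - un1 i j k)\<^sup>2)"

definition residual_pairing :: "nat \<Rightarrow> grid" where
  "residual_pairing m i j k =
      (- (u3 (Suc m) i j k - u3_fix i j k) - \<rho>u * (u2 (Suc m) i j k - u2 m i j k)) * (u1 (Suc m) i j k - un1 i j k)
    + (- (w3 (Suc m) i j k - w3_fix i j k) - \<rho>w * (w2 (Suc m) i j k - w2 m i j k)) * (w1 (Suc m) i j k - wn1 i j k)"

lemma u3_Suc: "u3 (Suc m) i j k
    = log_ratio (u2 (Suc m) i j k) - \<theta>0 * (2 * un i j k - unm1 i j k) - (1 - \<alpha>) * w2 (Suc m) i j k"
  using step_ii_u[rule_format, of m i j k] step_iii_u[rule_format, of m i j k]
  unfolding log_ratio_def by argo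

lemma w3_Suc: "w3 (Suc m) i j k = (1 - \<alpha>) * (u2 (Suc m) i j k - (4/3 * un i j k - 1/3 * unm1 i j k))"
  using step_ii_w[rule_format, of m i j k] step_iii_w[rule_format, of m i j k]
  by (simp add: algebra_simps; argo)

lemma fixed_point_step_i_u:
  "- (\<epsilon>\<^sup>2 + A * \<tau> * \<theta>0\<^sup>2) * lap h un1 i j k + A * \<tau> * \<theta>0\<^sup>2 * lap h un i j k
     - \<alpha> * wn1 i j k + u3_fix i j k = 0"
  using scheme_w[rule_format, of i j k] lap_diff[of h un1 un i j k]
  unfolding u3_fix_def log_ratio_def by (simp add: algebra_simps; argo)

lemma fixed_point_step_i_w:
  "\<alpha> * (- un1 i j k + 4/3 * un i j k - 1/3 * unm1 i j k) + 2 * \<tau> / 3 * lap h wn1 i j k - w3_fix i j k = 0"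
proof -
  have "lap h wn1 i j k = (3 * un1 i j k - 4 * un i j k + unm1 i j k) / (2 * \<tau>)"
    using scheme_u[rule_format, of i j k] tau_pos by (simp add: field_simps)
  then show ?thesis unfolding w3_fix_def using tau_pos by (simp add: field_simps; argo)
qed

lemma step_i_error_u:
  "- (\<epsilon>\<^sup>2 + A * \<tau> * \<theta>0\<^sup>2) * lap h (\<lambda>i j k. u1 (Suc m) i j k - un1 i j k) i j k
     - \<alpha> * (w1 (Suc m) i j k - wn1 i j k)
   = - (u3 (Suc m) i j k - u3_fix i j k) - \<rho>u * (u2 (Suc m) i j k - u2 m i j k)"
  using step_i_u[rule_format, of m i j k] step_iii_u[rule_format, of m i j k]
    fixed_point_step_i_u[of i j k] lap_diff[of h "u1 (Suc m)" un1 i j k]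
  by algebra

lemma step_i_error_w:
  "\<alpha> * (u1 (Suc m) i j k - un1 i j k) - 2 * \<tau> / 3 * lap h (\<lambda>i j k. w1 (Suc m) i j k - wn1 i j k) i j k
   = - (w3 (Suc m) i j k - w3_fix i j k) - \<rho>w * (w2 (Suc m) i j k - w2 m i j k)"
  using step_i_w[rule_format, of m i j k] step_iii_w[rule_format, of m i j k]
    fixed_point_step_i_w[of i j k] lap_diff[of h "w1 (Suc m)" wn1 i j k]
  by algebra

lemma linear_step_residual_nonneg: "0 \<le> grid_sum N (residual_pairing m)"
proof -
  have "0 \<le> \<epsilon>\<^sup>2 + A * \<tau> * \<theta>0\<^sup>2" "0 \<le> 2 * \<tau> / 3"
    using A_nonneg tau_pos by simp_all
  then show ?thesis
    unfolding residual_pairing_def step_i_error_u[symmetric] step_i_error_w[symmetric]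
    using per_step_i per_un1 per_wn1 by (intro grid_sum_coupled_lap_nonneg per_diff) simp_all
qed

lemma point_energy_descent:
  "2 * residual_pairing (Suc n) i j k + 2 * (u2 (Suc (Suc n)) i j k - un1 i j k)\<^sup>2
     \<le> point_energy (Suc n) i j k - point_energy (Suc (Suc n)) i j k"
  unfolding residual_pairing_def point_energy_def
proof (rule admm_energy_descent[OF rho_u_pos rho_w_pos])
  show "u3 (Suc (Suc n)) i j k = u3 (Suc n) i j k + \<rho>u * (u1 (Suc (Suc n)) i j k - u2 (Suc (Suc n)) i j k)"
    "w3 (Suc (Suc n)) i j k = w3 (Suc n) i j k + \<rho>w * (w1 (Suc (Suc n)) i j k - w2 (Suc (Suc n)) i j k)"
    using step_iii_u step_iii_w by simp_all
  have un1_ijk: "-1 < un1 i j k" "un1 i j k < 1" using un1_bounds by auto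
  have u2_ijk: "-1 < u2 (Suc l) i j k" "u2 (Suc l) i j k < 1" for l using step_ii_bounds by auto
  show "(u2 (Suc (Suc n)) i j k - un1 i j k)\<^sup>2
      \<le> (u3 (Suc (Suc n)) i j k - u3_fix i j k) * (u2 (Suc (Suc n)) i j k - un1 i j k)
        + (w3 (Suc (Suc n)) i j k - w3_fix i j k) * (w2 (Suc (Suc n)) i j k - wn1 i j k)"
    by (rule nonlinear_step_strongly_monotone[OF u3_fix_def w3_fix_def u3_Suc w3_Suc un1_ijk u2_ijk])
  have "(u2 (Suc (Suc n)) i j k - u2 (Suc n) i j k)\<^sup>2
      \<le> (u3 (Suc (Suc n)) i j k - u3 (Suc n) i j k) * (u2 (Suc (Suc n)) i j k - u2 (Suc n) i j k)
        + (w3 (Suc (Suc n)) i j k - w3 (Suc n) i j k) * (w2 (Suc (Suc n)) i j k - w2 (Suc n) i j k)"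
    by (rule nonlinear_step_strongly_monotone[OF u3_Suc w3_Suc u3_Suc w3_Suc u2_ijk u2_ijk])
  then show "0 \<le> (u3 (Suc (Suc n)) i j k - u3 (Suc n) i j k) * (u2 (Suc (Suc n)) i j k - u2 (Suc n) i j k)
      + (w3 (Suc (Suc n)) i j k - w3 (Suc n) i j k) * (w2 (Suc (Suc n)) i j k - w2 (Suc n) i j k)"
    by (rule order_trans[OF zero_le_power2])
qed

lemma energy_descent: "energy (Suc (Suc n)) + 2 * error (Suc (Suc n)) \<le> energy (Suc n)"
proof -
  have "grid_sum N (\<lambda>i j k. 2 * residual_pairing (Suc n) i j k + 2 * (u2 (Suc (Suc n)) i j k - un1 i j k)\<^sup>2)
      \<le> grid_sum N (\<lambda>i j k. point_energy (Suc n) i j k - point_energy (Suc (Suc n)) i j k)"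
    by (rule grid_sum_mono) (rule point_energy_descent)
  then have "2 * grid_sum N (residual_pairing (Suc n)) + 2 * error (Suc (Suc n))
      \<le> energy (Suc n) - energy (Suc (Suc n))"
    unfolding energy_def error_def by (simp only: grid_sum_add grid_sum_cmult grid_sum_diff)
  with linear_step_residual_nonneg[of "Suc n"] show ?thesis by linarith
qed

lemma error_tendsto_zero: "error \<longlonglongrightarrow> 0"
proof -
  have energy_nonneg: "0 \<le> energy n" and error_nonneg: "0 \<le> error n" for n
    unfolding energy_def point_energy_def error_def using rho_u_pos rho_w_pos
    by (simp_all add: grid_sum_nonneg admm_energy_nonneg)
  have "(\<lambda>n. error (Suc (Suc n))) \<longlonglongrightarrow> 0"
  proof (rule tendsto_zero_of_energy_descent)
    show "energy (Suc (Suc n)) + error (Suc (Suc n)) \<le> energy (Suc n)" for n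
      using energy_descent[of n] error_nonneg[of "Suc (Suc n)"] by linarith
  qed (simp_all add: energy_nonneg error_nonneg)
  then show ?thesis by (rule LIMSEQ_imp_Suc[OF LIMSEQ_imp_Suc])
qed

end

theorem theorem4p6:
  fixes L h \<epsilon> \<theta>0 \<tau> A \<alpha> \<rho>u \<rho>w :: real and N :: nat
    and un unm1 un1 wn1 :: grid
    and u1 w1 u2 w2 u3 w3 :: "nat \<Rightarrow> grid"
  assumes "L > 0" and "N > 0" and "h = L / real N"
    and "\<epsilon> > 0" and "\<theta>0 > 0" and "\<tau> > 0" and "A \<ge> 0"
    and "0 < \<alpha>" and "\<alpha> < 1" and "\<rho>u > 0" and "\<rho>w > 0"
    and "per N un" and "per N unm1"
    and "\<forall>i j k. -1 < un i j k \<and> un i j k < 1"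
    and "\<forall>i j k. -1 < unm1 i j k \<and> unm1 i j k < 1"
    \<comment> \<open>the scheme solution\<close>
    and "per N un1" and "per N wn1"
    and "\<forall>i j k. -1 < un1 i j k \<and> un1 i j k < 1"
    and "\<forall>i j k. 3 * un1 i j k - 4 * un i j k + unm1 i j k = 2 * \<tau> * lap h wn1 i j k"
    and "\<forall>i j k. wn1 i j k = ln (1 + un1 i j k) - ln (1 - un1 i j k)
                  - \<theta>0 * (2 * un i j k - unm1 i j k) - \<epsilon>\<^sup>2 * lap h un1 i j k
                  - A * \<tau> * \<theta>0\<^sup>2 * lap h (\<lambda>i j k. un1 i j k - un i j k) i j k"
    \<comment> \<open>Algorithm 2: initialisation\<close>
    and "u2 0 = un" and "w2 0 = (\<lambda>i j k. 0)"
    and "u3 0 = (\<lambda>i j k. 0)" and "w3 0 = (\<lambda>i j k. 0)"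
    \<comment> \<open>step (i)\<close>
    and "\<forall>m. per N (u1 (Suc m)) \<and> per N (w1 (Suc m))"
    and "\<forall>m i j k. (- \<epsilon>\<^sup>2 - A * \<tau> * \<theta>0\<^sup>2) * lap h (u1 (Suc m)) i j k
              + A * \<tau> * \<theta>0\<^sup>2 * lap h un i j k - \<alpha> * w1 (Suc m) i j k + u3 m i j k
              + \<rho>u * (u1 (Suc m) i j k - u2 m i j k) = 0"
    and "\<forall>m i j k. \<alpha> * (- u1 (Suc m) i j k + 4/3 * un i j k - 1/3 * unm1 i j k)
              + 2 * \<tau> / 3 * lap h (w1 (Suc m)) i j k - w3 m i j k
              - \<rho>w * (w1 (Suc m) i j k - w2 m i j k) = 0"
    \<comment> \<open>step (ii)\<close>
    and "\<forall>m. per N (u2 (Suc m)) \<and> per N (w2 (Suc m))"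
    and "\<forall>m i j k. -1 < u2 (Suc m) i j k \<and> u2 (Suc m) i j k < 1"
    and "\<forall>m i j k. ln (1 + u2 (Suc m) i j k) - ln (1 - u2 (Suc m) i j k)
              - \<theta>0 * (2 * un i j k - unm1 i j k) - (1 - \<alpha>) * w2 (Suc m) i j k - u3 m i j k
              - \<rho>u * (u1 (Suc m) i j k - u2 (Suc m) i j k) = 0"
    and "\<forall>m i j k. (1 - \<alpha>) * (- u2 (Suc m) i j k + 4/3 * un i j k - 1/3 * unm1 i j k)
              + w3 m i j k + \<rho>w * (w1 (Suc m) i j k - w2 (Suc m) i j k) = 0"
    \<comment> \<open>step (iii)\<close>
    and "\<forall>m i j k. u3 (Suc m) i j k = u3 m i j k + \<rho>u * (u1 (Suc m) i j k - u2 (Suc m) i j k)"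
    and "\<forall>m i j k. w3 (Suc m) i j k = w3 m i j k + \<rho>w * (w1 (Suc m) i j k - w2 (Suc m) i j k)"
  shows "(\<lambda>m. norm2 h N (\<lambda>i j k. u2 m i j k - un1 i j k)) \<longlonglongrightarrow> 0"
proof -
  interpret admm_iteration N h \<epsilon> \<theta>0 \<tau> A \<alpha> \<rho>u \<rho>w un unm1 un1 wn1 u1 w1 u2 w2 u3 w3
    by unfold_locales (fact assms)+
  have "norm2 h N (\<lambda>i j k. u2 m i j k - un1 i j k) = sqrt (h\<^sup>2 * error m)" for m
    unfolding norm2_eq_grid_sum error_def ..
  then show ?thesis
    using tendsto_real_sqrt[OF tendsto_mult_right_zero[OF error_tendsto_zero]] by simp
qed

end
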